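(* Consider natural gradient descent with momentum $\mu\in[0,1)$ on linear regression with label noise in the limit $N\to\infty$, i.e., with preconditioning matrix $\Lambda:=\frac\lambda S C^{-1}$, where $C=\frac1S(A\Sigma A+\mathrm{Tr}[A\Sigma]A+\sigma^2A)$. Let $g:=\frac{1}{1+D}\frac{1}{1+\mu}+\frac{1}{1-\mu}\frac1S$ and $$x:=\frac\lambda4g-\frac12\frac{\sigma^2}{1+D}+\frac14\sqrt{\lambda^2g^2+4\lambda\left(g-\frac{2}{1+D}\frac{1}{1+\mu}\right)\frac{\sigma^2}{1+D}+4\left(\frac{\sigma^2}{1+D}\right)^2}.$$ Then the model fluctuation is $\Sigma=xA^{-1}$, in the sense that $\Sigma=xA^{-1}$ (with the corresponding $C$ and $\Lambda$) solves the stationarity equation $(1-\mu)(\Lambda A\Sigma+\Sigma A\Lambda)-\frac{1+\mu^2}{1-\mu^2}\Lambda A\Sigma A\Lambda+\frac{\mu}{1-\mu^2}(\Lambda A\Lambda A\Sigma+\Sigma A\Lambda A\Lambda)=\Lambda C\Lambda$.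
   Context: Data: $x_i\in\mathbb{R}^D$ i.i.d. $\mathcal N(0,A)$, $A$ symmetric positive definite; $y_i=\mathbf{u}^{\mathrm T}x_i+\epsilon_i$ with label noise of mean $0$ and variance $\sigma^2$; squared loss with Hessian $A$; batch size $S$; learning rate $\lambda>0$. $\Sigma$ denotes the stationary covariance $\mathbb{E}[(\mathbf{w}-\mathbf{u})(\mathbf{w}-\mathbf{u})^{\mathrm T}]$ and $C$ the averaged minibatch noise covariance (equal to the Fisher information in this setting). *)

theory Defs
  imports "HOL-Analysis.Analysis"
begin

end

theory Submission
  imports Defs
begin

(* With Sig = x A^-1 we get A Sig = x I, hence C = (((1 + D) x + sigma^2) / S) A and
   Lam = lr / ((1 + D) x + sigma^2) A^-1.  Every term of the stationarity equation is then a
   scalar multiple of A^-1, and the equation collapses to a quadratic equation in x whose larger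
   root is the given x. *)

lemma invertible_matrix_inv:
  fixes A :: "'a::semiring_1^'n^'m"
  assumes "invertible A"
  shows "A ** matrix_inv A = mat 1" and "matrix_inv A ** A = mat 1"
  using someI_ex[OF assms[unfolded invertible_def]] by (simp_all add: matrix_inv_def)

lemma matrix_inv_eqI:
  fixes A B :: "'a::field^'n^'n"
  assumes "A ** B = mat 1"
  shows "matrix_inv A = B"
proof -
  have "invertible A"
    using assms invertible_right_inverse by blast
  then have "matrix_inv A = matrix_inv A ** (A ** B)"
    by (simp add: assms)
  also have "\<dots> = B"
    by (simp add: matrix_mul_assoc invertible_matrix_inv \<open>invertible A\<close>)
  finally show ?thesis .
qed

lemma matrix_inv_scaleR:
  fixes A :: "'a::real_field^'n^'n"
  assumes "invertible A" and "c \<noteq> 0"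
  shows "matrix_inv (c *\<^sub>R A) = inverse c *\<^sub>R matrix_inv A"
  by (rule matrix_inv_eqI)
    (simp add: assms matrix_scalar_ac scalar_matrix_assoc[symmetric] invertible_matrix_inv)

lemma pos_def_invertible:
  fixes A :: "real^'n^'n"
  assumes "\<And>v. v \<noteq> 0 \<Longrightarrow> v \<bullet> (A *v v) > 0"
  shows "invertible A"
proof -
  have "\<forall>v. A *v v = 0 \<longrightarrow> v = 0"
    using assms by (metis inner_zero_right less_irrefl)
  then show ?thesis
    by (simp add: invertible_left_inverse matrix_left_invertible_ker)
qed

lemma left_inverse_scaleR_mult:
  fixes A :: "'a::real_algebra_1^'n^'m" and Ai :: "'a^'m^'n"
  assumes "Ai ** A = mat 1"
  shows "(p *\<^sub>R Ai) ** A ** (q *\<^sub>R Ai) = (p * q) *\<^sub>R Ai"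
  by (simp add: assms matrix_scalar_ac scalar_matrix_assoc[symmetric])

lemma momentum_stationarity_isotropic:
  fixes A Ai :: "real^'n^'n" and l x mu :: real
  assumes "Ai ** A = mat 1" and "mu\<^sup>2 \<noteq> 1"
  shows "(1 - mu) *\<^sub>R ((l *\<^sub>R Ai) ** A ** (x *\<^sub>R Ai) + (x *\<^sub>R Ai) ** A ** (l *\<^sub>R Ai))
        - ((1 + mu^2) / (1 - mu^2)) *\<^sub>R ((l *\<^sub>R Ai) ** A ** (x *\<^sub>R Ai) ** A ** (l *\<^sub>R Ai))
        + (mu / (1 - mu^2)) *\<^sub>R ((l *\<^sub>R Ai) ** A ** (l *\<^sub>R Ai) ** A ** (x *\<^sub>R Ai)
            + (x *\<^sub>R Ai) ** A ** (l *\<^sub>R Ai) ** A ** (l *\<^sub>R Ai))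
      = (l * x * (2 * (1 - mu) - (1 - mu) / (1 + mu) * l)) *\<^sub>R Ai"
proof -
  have "(1 + mu^2) / (1 - mu^2) - 2 * mu / (1 - mu^2) = (1 - mu) / (1 + mu)"
  proof -
    have "1 - mu^2 = (1 - mu) * (1 + mu)" and "1 + mu^2 - 2 * mu = (1 - mu) * (1 - mu)"
      by (simp_all add: power2_eq_square algebra_simps)
    with assms(2) show ?thesis
      by (simp add: diff_divide_distrib[symmetric])
  qed
  then have coeff: "(1 - mu) * (l * x) + (1 - mu) * (x * l) - (1 + mu^2) / (1 - mu^2) * (l * x * l)
      + (mu / (1 - mu^2) * (l * l * x) + mu / (1 - mu^2) * (x * l * l))
      = l * x * (2 * (1 - mu) - (1 - mu) / (1 + mu) * l)"
    by (simp add: algebra_simps)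
  show ?thesis
    unfolding left_inverse_scaleR_mult[OF assms(1)] coeff[symmetric]
    by (simp only: scaleR_add_right scaleR_add_left scaleR_diff_left scaleR_scaleR)
qed

lemma quadratic_larger_root:
  fixes x \<beta> \<gamma> :: real
  assumes "0 \<le> \<beta>\<^sup>2 + 8 * \<gamma>" and "4 * x = \<beta> + sqrt (\<beta>\<^sup>2 + 8 * \<gamma>)"
  shows "2 * x\<^sup>2 - \<beta> * x = \<gamma>"
proof -
  have "(4 * x - \<beta>)\<^sup>2 = \<beta>\<^sup>2 + 8 * \<gamma>"
    using assms by simp
  then show ?thesis
    by (simp add: power2_eq_square algebra_simps)
qed

lemma momentum_fluctuation_root:
  fixes lr mu sigma E S g x :: real
  assumes "lr > 0" "E > 0" "S > 0" "\<bar>mu\<bar> < 1"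
    and g_def: "g = (1 / E) * (1 / (1 + mu)) + (1 / (1 - mu)) * (1 / S)"
    and x_def: "x = lr / 4 * g - 1/2 * (sigma^2 / E)
        + 1/4 * sqrt (lr^2 * g^2 + 4 * lr * (g - 2 / E * (1 / (1 + mu))) * (sigma^2 / E)
            + 4 * (sigma^2 / E)^2)"
  shows "E * x + sigma^2 > 0"
    and "2 * x * (E * x + sigma^2) - lr * x / (1 + mu) = lr * (E * x + sigma^2) / (S * (1 - mu))"
proof -
  define k where "k = sigma^2 / E"
  define a where "a = 1 / (1 + mu)"
  define b where "b = 1 / (S * (1 - mu))"
  have "a > 0" "b > 0" "k \<ge> 0"
    using assms(2-4) by (simp_all add: a_def b_def k_def)
  have g_ab: "g = a / E + b"
    by (simp add: g_def a_def b_def mult.commute)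
  have "g > 0"
    using \<open>a > 0\<close> \<open>b > 0\<close> assms(2) by (simp add: g_ab add_pos_pos)
  have "lr^2 * g^2 + 4 * lr * (g - 2 / E * (1 / (1 + mu))) * k + 4 * k^2
      = (lr * g - 2 * k)^2 + 8 * (b * lr * k)"
    by (simp add: g_ab a_def[symmetric] power2_eq_square algebra_simps)
  then have x4: "4 * x = (lr * g - 2 * k) + sqrt ((lr * g - 2 * k)^2 + 8 * (b * lr * k))"
    by (simp add: x_def k_def[symmetric] algebra_simps)
  have radicand_nonneg: "0 \<le> (lr * g - 2 * k)^2 + 8 * (b * lr * k)"
    using \<open>b > 0\<close> \<open>k \<ge> 0\<close> assms(1) by simp
  from quadratic_larger_root[OF this x4]
  have quadratic: "2 * x^2 - (lr * g - 2 * k) * x = b * lr * k" .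
  have "lr * g > 0"
    using \<open>g > 0\<close> assms(1) by simp
  then have "x + k > 0"
    using x4 \<open>k \<ge> 0\<close> real_sqrt_ge_zero[OF radicand_nonneg] by linarith
  then show "E * x + sigma^2 > 0"
    using assms(2) by (simp add: k_def field_simps)
  have "2 * x * (E * x + sigma^2) - lr * x * a - lr * (E * x + sigma^2) * b
      = E * (2 * x^2 - (lr * g - 2 * k) * x - b * lr * k)"
    using assms(2) by (simp add: g_ab k_def algebra_simps power2_eq_square)
  then show "2 * x * (E * x + sigma^2) - lr * x / (1 + mu) = lr * (E * x + sigma^2) / (S * (1 - mu))"
    by (simp add: quadratic a_def b_def)
qed

lemma momentum_fixed_point_scalar:
  fixes lr x y S mu :: real
  assumes "y > 0" "S > 0" "\<bar>mu\<bar> < 1"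
    and "2 * x * y - lr * x / (1 + mu) = lr * y / (S * (1 - mu))"
  shows "x * (2 * (1 - mu) - (1 - mu) / (1 + mu) * (lr / y)) = lr / y * (y / S)"
proof -
  have "1 + mu > 0" "1 - mu > 0"
    using assms(3) by auto
  then have "y * (1 + mu) > 0"
    using assms(1) by simp
  then have "x * (2 * (1 - mu) - (1 - mu) / (1 + mu) * (lr / y))
      = (1 - mu) / y * (2 * x * y - lr * x / (1 + mu))"
    using assms(1) \<open>1 + mu > 0\<close> by (simp add: field_simps)
  also have "\<dots> = lr / S"
    using assms \<open>1 - mu > 0\<close> by simp
  finally show ?thesis
    using assms(1) by simp
qed

theorem proposition6:
  fixes A Sig C Lam :: "real^'n^'n"
    and lr mu sigma g x :: real
    and S :: nat
  assumes A_sym: "transpose A = A"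
    and A_pd: "\<And>v :: real^'n. v \<noteq> 0 \<Longrightarrow> v \<bullet> (A *v v) > 0"
    and lr_pos: "lr > 0"
    and S_pos: "S \<ge> 1"
    and mu_range: "0 \<le> mu" "mu < 1"
    and g_def: "g = (1 / (1 + real CARD('n))) * (1 / (1 + mu)) + (1 / (1 - mu)) * (1 / real S)"
    and x_def: "x = lr / 4 * g - 1/2 * (sigma^2 / (1 + real CARD('n)))
        + 1/4 * sqrt (lr^2 * g^2
            + 4 * lr * (g - 2 / (1 + real CARD('n)) * (1 / (1 + mu))) * (sigma^2 / (1 + real CARD('n)))
            + 4 * (sigma^2 / (1 + real CARD('n)))^2)"
    and Sig_def: "Sig = x *\<^sub>R matrix_inv A"
    and C_def: "C = (1 / real S) *\<^sub>R (A ** Sig ** A + trace (A ** Sig) *\<^sub>R A + sigma^2 *\<^sub>R A)"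
    and Lam_def: "Lam = (lr / real S) *\<^sub>R matrix_inv C"
  shows "(1 - mu) *\<^sub>R (Lam ** A ** Sig + Sig ** A ** Lam)
        - ((1 + mu^2) / (1 - mu^2)) *\<^sub>R (Lam ** A ** Sig ** A ** Lam)
        + (mu / (1 - mu^2)) *\<^sub>R (Lam ** A ** Lam ** A ** Sig + Sig ** A ** Lam ** A ** Lam)
      = Lam ** C ** Lam"
proof -
  define y where "y = (1 + real CARD('n)) * x + sigma^2"
  have invA: "invertible A"
    using A_pd by (rule pos_def_invertible)
  have mu_abs: "\<bar>mu\<bar> < 1"
    using mu_range by simp
  have y_pos: "y > 0" and x_root: "2 * x * y - lr * x / (1 + mu) = lr * y / (real S * (1 - mu))"
    using momentum_fluctuation_root[OF lr_pos _ _ mu_abs g_def x_def] S_pos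
    by (simp_all add: y_def)
  have A_Sig: "A ** Sig = x *\<^sub>R mat 1"
    by (simp add: Sig_def matrix_scalar_ac invertible_matrix_inv[OF invA] flip: scalar_matrix_assoc)
  have "trace (A ** Sig) = real CARD('n) * x"
    by (simp add: A_Sig trace_def mat_def)
  then have "C = (1 / real S) *\<^sub>R (y *\<^sub>R A)"
    by (simp add: C_def A_Sig y_def algebra_simps flip: scalar_matrix_assoc)
  then have C_eq: "C = (y / real S) *\<^sub>R A"
    by simp
  define l where "l = lr / y"
  have Lam_eq: "Lam = l *\<^sub>R matrix_inv A"
    using y_pos S_pos by (simp add: l_def Lam_def C_eq matrix_inv_scaleR[OF invA])
  have rhs: "(l *\<^sub>R matrix_inv A) ** C ** (l *\<^sub>R matrix_inv A)
      = (l * (y / real S) * l) *\<^sub>R matrix_inv A"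
    by (simp add: C_eq matrix_scalar_ac invertible_matrix_inv[OF invA] flip: scalar_matrix_assoc)
  have "mu\<^sup>2 \<noteq> 1"
    using mu_abs abs_square_less_1 by (metis less_irrefl)
  note lhs = momentum_stationarity_isotropic[OF invertible_matrix_inv(2)[OF invA] this]
  have "x * (2 * (1 - mu) - (1 - mu) / (1 + mu) * l) = l * (y / real S)"
    using momentum_fixed_point_scalar[OF y_pos _ mu_abs x_root] S_pos by (simp add: l_def)
  then show ?thesis
    unfolding Lam_eq Sig_def lhs rhs by (simp add: mult.assoc)
qed

end
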